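(* Fix any total budget $\mathrm{TB}\in\mathbb N_0$ and let $n\in\mathbb N$. Then the disjunctive sum $n+\bar n=0$, where $n$ denotes the integer game form.
   Context: Game forms are defined recursively: $G=\{G^{\mathcal L}\mid G^{\mathcal R}\}$ with finite sets of Left and Right options, and finite birthday. $0=\{\varnothing\mid\varnothing\}$; for $n\in\mathbb N$ the integer game form is $n=\{n-1\mid\varnothing\}$. The conjugate is $\bar G=\{\overline{G^{\mathcal R}}\mid\overline{G^{\mathcal L}}\}$. The budget set for total budget $\mathrm{TB}$ is $\mathcal B=\{0,\dots,\mathrm{TB},\hat 0,\dots,\widehat{\mathrm{TB}}\}$: state $p$ (resp. $\hat p$) means Left holds $p$ dollars and Right holds $\mathrm{TB}-p$, and Right (resp. Left) holds the tie-breaking marker. Play of $(G,\tilde p)$: at every position (terminal ones included) both players bid simultaneously, Left $\ell\in\{0,\dots,p\}$, Right $r\in\{0,\dots,\mathrm{TB}-p\}$. If Left holds the marker (state $\hat p$): if $\ell>r$ Left moves to $(G^L,\widehat{p-\ell})$, or, including the marker (allowed when $\ell\ge r$), to $(G^L,p-\ell)$; if $\ell=r$ Left wins, the marker passes to Right, play continues at $(G^L,p-\ell)$; if $\ell<r$ Right moves to $(G^R,\widehat{p+r})$. Symmetrically when Right holds the marker (state $p$): if $r>\ell$ Right moves to $(G^R,p+r)$ or, including the marker, to $(G^R,\widehat{p+r})$; if $r=\ell$ Right wins, the marker passes to Left, play continues at $(G^R,\widehat{p+r})$; if $r<\ell$ Left moves to $(G^L,p-\ell)$. A player who wins a bid but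 has no option loses. $o(G,\tilde p)\in\{\mathrm L,\mathrm R\}$ is the winner under optimal play; $\mathrm L>\mathrm R$. Disjunctive sum $G+H=\{G^{\mathcal L}+H,G+H^{\mathcal L}\mid G^{\mathcal R}+H,G+H^{\mathcal R}\}$. $G\ge H$ means $o(G+X,\tilde p)\ge o(H+X,\tilde p)$ for all game forms $X$ and all $\tilde p\in\mathcal B$; $G=H$ means $G\ge H$ and $H\ge G$. *)

theory Defs
  imports Main "HOL-Library.FSet"
begin

datatype game = Game (lopts: "game fset") (ropts: "game fset")

primrec gconj :: "game \<Rightarrow> game" where
  "gconj (Game L R) = Game (fimage gconj R) (fimage gconj L)"

primrec int_game :: "nat \<Rightarrow> game" where
  "int_game 0 = Game {||} {||}"
| "int_game (Suc k) = Game {|int_game k|} {||}"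

lemma game_opt_size[termination_simp]:
  "x |\<in>| L \<Longrightarrow> size x < size (Game L R)"
  "x |\<in>| R \<Longrightarrow> size x < size (Game L R)"
  by (induction L; auto simp: less_SucI) (induction R; auto simp: less_SucI)

function gsum :: "game \<Rightarrow> game \<Rightarrow> game" where
  "gsum (Game GL GR) (Game HL HR) =
     Game ((\<lambda>g. gsum g (Game HL HR)) |`| GL |\<union>| (\<lambda>h. gsum (Game GL GR) h) |`| HL)
          ((\<lambda>g. gsum g (Game HL HR)) |`| GR |\<union>| (\<lambda>h. gsum (Game GL GR) h) |`| HR)"
  by pat_completeness auto
termination
  by (relation "measure (\<lambda>(g,h). size g + size h)") (auto dest: game_opt_size)

text \<open>Bidding outcome. \<open>winL TB G p m\<close>: Left wins (has a winning strategy) in \<open>(G, p~)\<close>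
  with total budget TB, where Left holds \<open>p\<close> dollars, Right holds \<open>TB - p\<close>, and
  \<open>m = True\<close> iff Left holds the tie-breaking marker (state \<open>p^\<close>), \<open>m = False\<close> iff
  Right holds it (state \<open>p\<close>).  Left bids first in the quantifier order
  (exists a Left bid such that for every Right bid ...).\<close>
function winL :: "nat \<Rightarrow> game \<Rightarrow> nat \<Rightarrow> bool \<Rightarrow> bool" where
  "winL TB (Game GL GR) p m =
    (\<exists>l\<le>p. \<forall>r\<le>TB - p.
      (if m then
         (if r < l then (\<exists>g|\<in>|GL. winL TB g (p - l) True \<or> winL TB g (p - l) False)
          else if l = r then (\<exists>g|\<in>|GL. winL TB g (p - l) False)
          else (\<forall>g|\<in>|GR. winL TB g (p + r) True))
       else
         (if l < r then (\<forall>g|\<in>|GR. winL TB g (p + r) False \<and> winL TB g (p + r) True)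
          else if l = r then (\<forall>g|\<in>|GR. winL TB g (p + r) True)
          else (\<exists>g|\<in>|GL. winL TB g (p - l) False))))"
  by pat_completeness auto
termination
  by (relation "measure (\<lambda>(TB,g,p,m). size g)") (auto dest: game_opt_size)

datatype outcome = Lwin | Rwin

definition outcome :: "nat \<Rightarrow> game \<Rightarrow> nat \<Rightarrow> bool \<Rightarrow> outcome" where
  "outcome TB G p m = (if winL TB G p m then Lwin else Rwin)"

definition outcome_le :: "outcome \<Rightarrow> outcome \<Rightarrow> bool" where
  "outcome_le a b = (a = Rwin \<or> b = Lwin)"

definition game_ge :: "nat \<Rightarrow> game \<Rightarrow> game \<Rightarrow> bool" where
  "game_ge TB G H = (\<forall>X. \<forall>p\<le>TB. \<forall>m.
      outcome_le (outcome TB (gsum H X) p m) (outcome TB (gsum G X) p m))"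

definition game_eq :: "nat \<Rightarrow> game \<Rightarrow> game \<Rightarrow> bool" where
  "game_eq TB G H = (game_ge TB G H \<and> game_ge TB H G)"

end

theory Submission
  imports Defs
begin

(* Let D = 1 + (-1), the game form {-1 | 1}. Since options form finite sets, the disjunctive sum
   is associative and commutative on game forms themselves, so n + (-n) + X = X + D + ... + D, and
   it suffices to show that adding D to any game G does not change the winner from any budget state.
   This goes by induction on G, comparing options: if Left wins the new Left option G - 1, she already
   has a winning Left move in G; and if she wins after every Right move of G, she also wins the new
   Right option G + 1. Both comparisons rest on two facts: the winner is monotone in the budget
   state, a dollar being worth more than the tie-breaking marker; and adding 1 (resp. -1) to a game
   is worth at least the marker to Left (resp. Right). *)

lemma lopts_gsum: "lopts (gsum G H) = (\<lambda>g. gsum g H) |`| lopts G |\<union>| gsum G |`| lopts H"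
  by (cases G; cases H) simp

lemma ropts_gsum: "ropts (gsum G H) = (\<lambda>g. gsum g H) |`| ropts G |\<union>| gsum G |`| ropts H"
  by (cases G; cases H) simp

lemma size_option_less:
  "g |\<in>| lopts G \<Longrightarrow> size g < size G"
  "g |\<in>| ropts G \<Longrightarrow> size g < size G"
  by (cases G; auto dest: game_opt_size)+

lemma gsum_commute: "gsum G H = gsum H G"
  by (induction G H rule: gsum.induct) (simp add: sup_commute cong: fimage_cong)

lemma gsum_int_game_0: "gsum G (int_game 0) = G"
  by (induction G) (simp cong: fimage_cong)

lemma gsum_assoc: "gsum (gsum A B) C = gsum A (gsum B C)"
proof (induction "size A + size B + size C" arbitrary: A B C rule: less_induct)
  case less
  have "gsum (gsum x B) C = gsum x (gsum B C)" if "x |\<in>| lopts A |\<union>| ropts A" for x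
    using that size_option_less less[of x B C] by auto
  moreover have "gsum (gsum A x) C = gsum A (gsum x C)" if "x |\<in>| lopts B |\<union>| ropts B" for x
    using that size_option_less less[of A x C] by auto
  moreover have "gsum (gsum A B) x = gsum A (gsum B x)" if "x |\<in>| lopts C |\<union>| ropts C" for x
    using that size_option_less less[of A B x] by auto
  ultimately show ?case
    by (intro game.expand conjI)
      (simp_all add: lopts_gsum ropts_gsum fimage_funion fimage_fimage sup_assoc cong: fimage_cong)
qed

interpretation gsum: comm_monoid gsum "int_game 0"
  by unfold_locales (fact gsum_assoc gsum_commute gsum_int_game_0)+

lemma gconj_gsum: "gconj (gsum G H) = gsum (gconj G) (gconj H)"
  by (induction G H rule: gsum.induct) (simp add: fimage_funion fimage_fimage cong: fimage_cong)

lemma lopts_gconj: "lopts (gconj G) = gconj |`| ropts G"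
  by (cases G) simp

lemma ropts_gconj: "ropts (gconj G) = gconj |`| lopts G"
  by (cases G) simp

lemma gconj_int_game_0 [simp]: "gconj (int_game 0) = int_game 0"
  by simp

lemma lopts_int_game [simp]:
  "lopts (int_game 0) = {||}"
  "lopts (int_game (Suc k)) = {|int_game k|}"
  by simp_all

lemma ropts_int_game [simp]: "ropts (int_game k) = {||}"
  by (cases k) simp_all

declare int_game.simps [simp del]

lemma lopts_gconj_int_game: "lopts (gconj (int_game k)) = {||}"
  by (simp add: lopts_gconj)

lemma int_game_Suc: "int_game (Suc k) = gsum (int_game k) (int_game 1)"
proof (induction k)
  case (Suc k)
  show ?case
    by (intro game.expand) (simp add: lopts_gsum ropts_gsum Suc[unfolded One_nat_def, symmetric])
qed simp

definition left_move_wins :: "nat \<Rightarrow> game \<Rightarrow> nat \<Rightarrow> bool \<Rightarrow> bool" where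
  "left_move_wins TB G p m \<longleftrightarrow> (\<exists>g|\<in>|lopts G. winL TB g p m)"

definition right_moves_win :: "nat \<Rightarrow> game \<Rightarrow> nat \<Rightarrow> bool \<Rightarrow> bool" where
  "right_moves_win TB G p m \<longleftrightarrow> (\<forall>g|\<in>|ropts G. winL TB g p m)"

definition bid_wins :: "nat \<Rightarrow> game \<Rightarrow> nat \<Rightarrow> bool \<Rightarrow> nat \<Rightarrow> nat \<Rightarrow> bool" where
  "bid_wins TB G p m l r \<longleftrightarrow>
    (if m then
       if r < l then left_move_wins TB G (p - l) True \<or> left_move_wins TB G (p - l) False
       else if l = r then left_move_wins TB G (p - l) False
       else right_moves_win TB G (p + r) True
     else
       if l < r then right_moves_win TB G (p + r) False \<and> right_moves_win TB G (p + r) True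
       else if l = r then right_moves_win TB G (p + r) True
       else left_move_wins TB G (p - l) False)"

lemma winL_iff_bid: "winL TB G p m \<longleftrightarrow> (\<exists>l\<le>p. \<forall>r\<le>TB - p. bid_wins TB G p m l r)"
  by (cases G) (simp only: winL.simps game.sel bid_wins_def left_move_wins_def right_moves_win_def
      fBall_conj_distrib fBex_disj_distrib)

lemma bid_wins_marker:
  "r < l \<Longrightarrow> bid_wins TB G p True l r \<longleftrightarrow>
     left_move_wins TB G (p - l) True \<or> left_move_wins TB G (p - l) False"
  "bid_wins TB G p True l l \<longleftrightarrow> left_move_wins TB G (p - l) False"
  "l < r \<Longrightarrow> bid_wins TB G p True l r \<longleftrightarrow> right_moves_win TB G (p + r) True"
  by (auto simp: bid_wins_def)

lemma bid_wins_no_marker: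
  "r < l \<Longrightarrow> bid_wins TB G p False l r \<longleftrightarrow> left_move_wins TB G (p - l) False"
  "bid_wins TB G p False l l \<longleftrightarrow> right_moves_win TB G (p + l) True"
  "l < r \<Longrightarrow> bid_wins TB G p False l r \<longleftrightarrow>
     right_moves_win TB G (p + r) False \<and> right_moves_win TB G (p + r) True"
  by (auto simp: bid_wins_def)

lemma winL_mono_moves:
  assumes left: "\<And>q u. q \<le> TB \<Longrightarrow> left_move_wins TB G q u \<Longrightarrow> left_move_wins TB H q u"
    and right: "\<And>q u. q \<le> TB \<Longrightarrow> right_moves_win TB G q u \<Longrightarrow> right_moves_win TB H q u"
    and "p \<le> TB" and "winL TB G p m"
  shows "winL TB H p m"
proof -
  obtain l where "l \<le> p" and G: "\<And>r. r \<le> TB - p \<Longrightarrow> bid_wins TB G p m l r"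
    using \<open>winL TB G p m\<close> winL_iff_bid by blast
  have "bid_wins TB H p m l r" if "r \<le> TB - p" for r
    using G[OF that] left[of "p - l"] right[of "p + r"] that \<open>p \<le> TB\<close>
    unfolding bid_wins_def by auto
  with \<open>l \<le> p\<close> show ?thesis
    using winL_iff_bid by blast
qed

section \<open>Monotonicity in the budget state\<close>

text \<open>\<open>(q, n)\<close> is at least as good for Left as \<open>(p, m)\<close>: the marker is worth less than a dollar.\<close>
definition state_le :: "nat \<Rightarrow> bool \<Rightarrow> nat \<Rightarrow> bool \<Rightarrow> bool" where
  "state_le p m q n \<longleftrightarrow> p \<le> q \<and> m = n \<or> p < q \<and> m \<and> \<not> n"

context
  fixes TB :: nat and G :: game
  assumes left_mono: "\<And>q u q' u'. state_le q u q' u' \<Longrightarrow> q' \<le> TB \<Longrightarrow>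
      left_move_wins TB G q u \<Longrightarrow> left_move_wins TB G q' u'"
    and right_mono: "\<And>q u q' u'. state_le q u q' u' \<Longrightarrow> q' \<le> TB \<Longrightarrow>
      right_moves_win TB G q u \<Longrightarrow> right_moves_win TB G q' u'"
begin

lemma bid_wins_mono_budget:
  assumes "p \<le> q" and "q \<le> TB" and "r \<le> TB - q" and "bid_wins TB G p m l r"
  shows "bid_wins TB G q m l r"
proof -
  have "left_move_wins TB G (q - l) u" if "left_move_wins TB G (p - l) u" for u
    by (rule left_mono[OF _ _ that]) (use assms in \<open>auto simp: state_le_def\<close>)
  moreover have "right_moves_win TB G (q + r) u" if "right_moves_win TB G (p + r) u" for u
    by (rule right_mono[OF _ _ that]) (use assms in \<open>auto simp: state_le_def\<close>)
  ultimately show ?thesis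
    using \<open>bid_wins TB G p m l r\<close> unfolding bid_wins_def by auto
qed

lemma bid_wins_dollar_for_marker:
  assumes "p < q" and "q \<le> TB" and "r \<le> TB - q" and "l \<le> p"
    and G: "\<And>r. r \<le> TB - p \<Longrightarrow> bid_wins TB G p True l r"
  shows "bid_wins TB G q False l r"
proof -
  have "r \<le> TB - p"
    using assms by linarith
  consider "r < l" | "r = l" | "l < r" by linarith
  then show ?thesis
  proof cases
    case 1
    have "left_move_wins TB G (q - l) False" if "left_move_wins TB G (p - l) u" for u
      by (rule left_mono[OF _ _ that]) (use assms in \<open>auto simp: state_le_def\<close>)
    then show ?thesis
      using G[OF \<open>r \<le> TB - p\<close>] 1 by (auto simp: bid_wins_marker bid_wins_no_marker)
  next
    case 2
    \<comment> \<open>A tie at \<open>q\<close>, won by Right, is compared with Right outbidding Left by one dollar at \<open>p\<close>.\<close>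
    have "right_moves_win TB G (q + l) True" if "right_moves_win TB G (p + (l + 1)) True"
      by (rule right_mono[OF _ _ that]) (use assms 2 in \<open>auto simp: state_le_def\<close>)
    moreover have "l + 1 \<le> TB - p"
      using assms 2 by linarith
    ultimately show ?thesis
      using G[of "l + 1"] 2 by (simp add: bid_wins_marker bid_wins_no_marker)
  next
    case 3
    have "right_moves_win TB G (q + r) u" if "right_moves_win TB G (p + r) True" for u
      by (rule right_mono[OF _ _ that]) (use assms in \<open>auto simp: state_le_def\<close>)
    then show ?thesis
      using G[OF \<open>r \<le> TB - p\<close>] 3 by (simp add: bid_wins_marker bid_wins_no_marker)
  qed
qed

end

lemma winL_mono_state:
  assumes "state_le p m q n" and "q \<le> TB" and "winL TB G p m"
  shows "winL TB G q n"
  using assms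
proof (induction G arbitrary: p m q n rule: measure_induct_rule[of size])
  case (less G)
  have left: "left_move_wins TB G q' u'"
    if "state_le q u q' u'" "q' \<le> TB" "left_move_wins TB G q u" for q u q' u'
    using that less.IH size_option_less unfolding left_move_wins_def by blast
  have right: "right_moves_win TB G q' u'"
    if "state_le q u q' u'" "q' \<le> TB" "right_moves_win TB G q u" for q u q' u'
    using that less.IH size_option_less unfolding right_moves_win_def by blast
  obtain l where "l \<le> p" and G: "\<And>r. r \<le> TB - p \<Longrightarrow> bid_wins TB G p m l r"
    using \<open>winL TB G p m\<close> winL_iff_bid by blast
  consider "m = n" "p \<le> q" | "m" "\<not> n" "p < q"
    using \<open>state_le p m q n\<close> unfolding state_le_def by blast
  then have "bid_wins TB G q n l r" if "r \<le> TB - q" for r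
  proof cases
    case 1
    then show ?thesis
      using bid_wins_mono_budget[OF left right] G[of r] that \<open>q \<le> TB\<close> by simp
  next
    case 2
    then show ?thesis
      using bid_wins_dollar_for_marker[OF left right] G that \<open>q \<le> TB\<close> \<open>l \<le> p\<close> by simp
  qed
  moreover have "l \<le> q"
    using \<open>l \<le> p\<close> \<open>state_le p m q n\<close> unfolding state_le_def by auto
  ultimately show ?case
    unfolding winL_iff_bid by blast
qed

lemma left_move_wins_mono_state:
  "state_le q u q' u' \<Longrightarrow> q' \<le> TB \<Longrightarrow> left_move_wins TB G q u \<Longrightarrow> left_move_wins TB G q' u'"
  unfolding left_move_wins_def using winL_mono_state by blast

lemma right_moves_win_mono_state:
  "state_le q u q' u' \<Longrightarrow> q' \<le> TB \<Longrightarrow> right_moves_win TB G q u \<Longrightarrow> right_moves_win TB G q' u'"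
  unfolding right_moves_win_def using winL_mono_state by blast

lemma winL_of_right_moves_win:
  assumes "p \<le> TB" and "right_moves_win TB G p True"
  shows "winL TB G p False"
proof -
  have "bid_wins TB G p False 0 r" if "r \<le> TB - p" for r
  proof (cases "r = 0")
    case False
    have "right_moves_win TB G (p + r) u" for u
      by (rule right_moves_win_mono_state[OF _ _ assms(2)])
        (use False that \<open>p \<le> TB\<close> in \<open>auto simp: state_le_def\<close>)
    with False show ?thesis
      by (simp add: bid_wins_no_marker)
  qed (use assms in \<open>simp add: bid_wins_no_marker\<close>)
  then show ?thesis
    unfolding winL_iff_bid by blast
qed

lemma left_move_wins_of_winL:
  assumes "p \<le> TB" and "winL TB G p True"
  shows "left_move_wins TB G p False"
proof -
  obtain l where "l \<le> p" and "bid_wins TB G p True l 0"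
    using assms(2) unfolding winL_iff_bid by blast
  then obtain u where "left_move_wins TB G (p - l) u" and "u \<longrightarrow> 0 < l"
    by (cases "l = 0") (auto simp: bid_wins_marker)
  moreover have "state_le (p - l) u p False"
    using \<open>l \<le> p\<close> \<open>u \<longrightarrow> 0 < l\<close> unfolding state_le_def by auto
  ultimately show ?thesis
    using left_move_wins_mono_state \<open>p \<le> TB\<close> by blast
qed

section \<open>Adding one-sided games\<close>

lemma winL_gsum_of_no_ropts:
  assumes "ropts H = {||}" and "p \<le> TB" and "winL TB G p m"
  shows "winL TB (gsum G H) p m"
  using assms(2,3)
proof (induction G arbitrary: p m rule: measure_induct_rule[of size])
  case (less G)
  show ?case
  proof (rule winL_mono_moves[OF _ _ less.prems])
    show "left_move_wins TB (gsum G H) q u" if "q \<le> TB" "left_move_wins TB G q u" for q u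
      using that less.IH size_option_less unfolding left_move_wins_def lopts_gsum by blast
    show "right_moves_win TB (gsum G H) q u" if "q \<le> TB" "right_moves_win TB G q u" for q u
      using that less.IH size_option_less assms(1) unfolding right_moves_win_def ropts_gsum by auto
  qed
qed

lemma winL_of_gsum_no_lopts:
  assumes "lopts H = {||}" and "p \<le> TB" and "winL TB (gsum G H) p m"
  shows "winL TB G p m"
  using assms(2,3)
proof (induction G arbitrary: p m rule: measure_induct_rule[of size])
  case (less G)
  show ?case
  proof (rule winL_mono_moves[OF _ _ less.prems])
    show "left_move_wins TB G q u" if "q \<le> TB" "left_move_wins TB (gsum G H) q u" for q u
      using that assms(1) unfolding left_move_wins_def lopts_gsum
      by (auto intro: less.IH[OF size_option_less(1)])
    show "right_moves_win TB G q u" if "q \<le> TB" "right_moves_win TB (gsum G H) q u" for q u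
      using that less.IH size_option_less unfolding right_moves_win_def ropts_gsum by blast
  qed
qed

lemma left_move_wins_gsum_of_no_ropts:
  "ropts H = {||} \<Longrightarrow> q \<le> TB \<Longrightarrow> left_move_wins TB G q u \<Longrightarrow> left_move_wins TB (gsum G H) q u"
  unfolding left_move_wins_def lopts_gsum using winL_gsum_of_no_ropts by blast

lemma right_moves_win_gsum_of_no_ropts:
  "ropts H = {||} \<Longrightarrow> q \<le> TB \<Longrightarrow> right_moves_win TB G q u \<Longrightarrow> right_moves_win TB (gsum G H) q u"
  unfolding right_moves_win_def ropts_gsum using winL_gsum_of_no_ropts by auto

lemma left_move_wins_of_gsum_no_lopts:
  "lopts H = {||} \<Longrightarrow> q \<le> TB \<Longrightarrow> left_move_wins TB (gsum G H) q u \<Longrightarrow> left_move_wins TB G q u"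
  unfolding left_move_wins_def lopts_gsum by (auto intro: winL_of_gsum_no_lopts)

lemma right_moves_win_of_gsum_no_lopts:
  "lopts H = {||} \<Longrightarrow> q \<le> TB \<Longrightarrow> right_moves_win TB (gsum G H) q u \<Longrightarrow> right_moves_win TB G q u"
  unfolding right_moves_win_def ropts_gsum using winL_of_gsum_no_lopts by blast

lemma left_option_gsum_one: "G |\<in>| lopts (gsum G (int_game 1))"
  by (simp add: lopts_gsum)

lemma right_option_gsum_minus_one: "G |\<in>| ropts (gsum G (gconj (int_game 1)))"
  by (simp add: ropts_gsum ropts_gconj)

lemma winL_gsum_one_marker:
  assumes "p \<le> TB" and "winL TB G p False"
  shows "winL TB (gsum G (int_game 1)) p True"
proof -
  let ?H = "gsum G (int_game 1)"
  have left: "left_move_wins TB ?H q u" if "q \<le> TB" "left_move_wins TB G q u" for q u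
    using left_move_wins_gsum_of_no_ropts that by simp
  have right: "right_moves_win TB ?H q u" if "q \<le> TB" "right_moves_win TB G q u" for q u
    using right_moves_win_gsum_of_no_ropts that by simp
  obtain l where "l \<le> p" and G: "\<And>r. r \<le> TB - p \<Longrightarrow> bid_wins TB G p False l r"
    using assms(2) unfolding winL_iff_bid by blast
  have "left_move_wins TB ?H (p - l) False"
  proof (cases "l = 0")
    case True
    then show ?thesis
      using assms(2) left_option_gsum_one unfolding left_move_wins_def by auto
  next
    case False
    then show ?thesis
      using G[of 0] left[of "p - l"] \<open>p \<le> TB\<close> by (simp add: bid_wins_no_marker)
  qed
  \<comment> \<open>Left repeats her bid \<open>l\<close> from \<open>G\<close>; holding the marker, she now also wins ties.\<close>
  then have "bid_wins TB ?H p True l r" if "r \<le> TB - p" for r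
    using G[OF that] right[of "p + r"] that \<open>p \<le> TB\<close>
    by (cases "r < l"; cases "r = l") (auto simp: bid_wins_marker bid_wins_no_marker)
  with \<open>l \<le> p\<close> show ?thesis
    unfolding winL_iff_bid by blast
qed

lemma winL_marker_of_gsum_minus_one:
  assumes "p \<le> TB" and "winL TB (gsum G (gconj (int_game 1))) p False"
  shows "winL TB G p True"
proof -
  let ?H = "gsum G (gconj (int_game 1))"
  have left: "left_move_wins TB G q u" if "q \<le> TB" "left_move_wins TB ?H q u" for q u
    using left_move_wins_of_gsum_no_lopts[OF lopts_gconj_int_game] that by blast
  have right: "right_moves_win TB G q u" if "q \<le> TB" "right_moves_win TB ?H q u" for q u
    using right_moves_win_of_gsum_no_lopts[OF lopts_gconj_int_game] that by blast
  obtain l where "l \<le> p" and H: "\<And>r. r \<le> TB - p \<Longrightarrow> bid_wins TB ?H p False l r"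
    using assms(2) unfolding winL_iff_bid by blast
  show ?thesis
  proof (cases "l = 0")
    case True
    then have "right_moves_win TB ?H p True"
      using H[of 0] by (simp add: bid_wins_no_marker)
    then show ?thesis
      using right_option_gsum_minus_one unfolding right_moves_win_def by blast
  next
    case False
    then have "left_move_wins TB G (p - l) False"
      using H[of 0] left[of "p - l"] \<open>p \<le> TB\<close> by (simp add: bid_wins_no_marker)
    then have "bid_wins TB G p True l r" if "r \<le> TB - p" for r
      using H[OF that] right[of "p + r"] that \<open>p \<le> TB\<close>
      by (cases "r < l"; cases "r = l") (auto simp: bid_wins_marker bid_wins_no_marker)
    with \<open>l \<le> p\<close> show ?thesis
      unfolding winL_iff_bid by blast
  qed
qed

lemma winL_gsum_one_of_right_moves_win:
  assumes "p \<le> TB" and "right_moves_win TB G p m"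
  shows "winL TB (gsum G (int_game 1)) p m"
proof -
  let ?H = "gsum G (int_game 1)"
  have right: "right_moves_win TB ?H q u" if "q \<le> TB" "right_moves_win TB G q u" for q u
    using right_moves_win_gsum_of_no_ropts that by simp
  have right_marker: "right_moves_win TB ?H q True"
    if "q \<le> TB" "right_moves_win TB G q False" for q
    using that unfolding right_moves_win_def ropts_gsum ropts_int_game
    by (auto simp del: One_nat_def intro: winL_gsum_one_marker)
  have "bid_wins TB ?H p m 0 r" if "r \<le> TB - p" for r
  proof (cases "r = 0")
    case True
    show ?thesis
    proof (cases m)
      case True
      then have "winL TB G p False"
        using winL_of_right_moves_win assms by simp
      then have "left_move_wins TB ?H p False"
        using left_option_gsum_one unfolding left_move_wins_def by blast
      with \<open>r = 0\<close> \<open>m\<close> show ?thesis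
        by (simp add: bid_wins_marker)
    next
      case False
      with \<open>r = 0\<close> show ?thesis
        using right_marker[of p] assms by (simp add: bid_wins_no_marker)
    qed
  next
    case False
    have "right_moves_win TB G (p + r) (m \<and> u)" for u
      by (rule right_moves_win_mono_state[OF _ _ assms(2)])
        (use False that \<open>p \<le> TB\<close> in \<open>auto simp: state_le_def\<close>)
    with False that \<open>p \<le> TB\<close> show ?thesis
      using right[of "p + r"] right_marker[of "p + r"]
      by (cases m) (auto simp: bid_wins_marker bid_wins_no_marker)
  qed
  then show ?thesis
    unfolding winL_iff_bid by blast
qed

lemma left_move_wins_of_winL_gsum_minus_one:
  assumes "p \<le> TB" and "winL TB (gsum G (gconj (int_game 1))) p m"
  shows "left_move_wins TB G p m"
proof -
  let ?H = "gsum G (gconj (int_game 1))"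
  have left: "left_move_wins TB G q u" if "q \<le> TB" "left_move_wins TB ?H q u" for q u
    using left_move_wins_of_gsum_no_lopts[OF lopts_gconj_int_game] that by blast
  have left_marker: "left_move_wins TB G q True"
    if "q \<le> TB" "left_move_wins TB ?H q False" for q
    using that lopts_gconj_int_game unfolding left_move_wins_def lopts_gsum
    by (auto simp del: One_nat_def intro: winL_marker_of_gsum_minus_one)
  obtain l where "l \<le> p" and H: "bid_wins TB ?H p m l 0"
    using assms(2) unfolding winL_iff_bid by blast
  have "p - l \<le> TB"
    using assms(1) by simp
  show ?thesis
  proof (cases "l = 0")
    case True
    show ?thesis
    proof (cases m)
      case True
      with \<open>l = 0\<close> H show ?thesis
        using left_marker[of p] assms(1) by (simp add: bid_wins_marker)
    next
      case False
      with \<open>l = 0\<close> H have "right_moves_win TB ?H p True"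
        by (simp add: bid_wins_no_marker)
      then have "winL TB G p True"
        using right_option_gsum_minus_one unfolding right_moves_win_def by blast
      with False show ?thesis
        using left_move_wins_of_winL assms(1) by simp
    qed
  next
    case False
    have "left_move_wins TB G (p - l) (m \<or> u)" if "left_move_wins TB ?H (p - l) u" for u
      using that left[of "p - l" u] left_marker[of "p - l"] \<open>p - l \<le> TB\<close> by (cases u; cases m) auto
    then have "left_move_wins TB G (p - l) m"
      using H False by (cases m) (auto simp: bid_wins_marker bid_wins_no_marker)
    moreover have "state_le (p - l) m p m"
      using False \<open>l \<le> p\<close> unfolding state_le_def by auto
    ultimately show ?thesis
      using left_move_wins_mono_state assms(1) by blast
  qed
qed

section \<open>Cancellation\<close>

lemma winL_gsum_one_minus_one_cancel:
  assumes "p \<le> TB"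
  shows "winL TB (gsum G (gsum (int_game 1) (gconj (int_game 1)))) p m \<longleftrightarrow> winL TB G p m"
  using assms
proof (induction G arbitrary: p m rule: measure_induct_rule[of size])
  case (less G)
  let ?D = "gsum (int_game 1) (gconj (int_game 1))"
  have lopts_D: "lopts ?D = {|gconj (int_game 1)|}"
    by (simp add: lopts_gsum lopts_gconj)
  have ropts_D: "ropts ?D = {|int_game 1|}"
    by (simp add: ropts_gsum ropts_gconj)
  have IH: "winL TB (gsum g ?D) q u \<longleftrightarrow> winL TB g q u"
    if "g |\<in>| lopts G |\<union>| ropts G" "q \<le> TB" for g q u
    using that less.IH size_option_less by blast
  show ?case
  proof
    assume "winL TB (gsum G ?D) p m"
    with less.prems show "winL TB G p m"
    proof (rule winL_mono_moves[rotated 2])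
      show "left_move_wins TB G q u" if "q \<le> TB" "left_move_wins TB (gsum G ?D) q u" for q u
        using that IH left_move_wins_of_winL_gsum_minus_one
        unfolding left_move_wins_def lopts_gsum[of G] lopts_D by (auto simp del: One_nat_def)
      show "right_moves_win TB G q u" if "q \<le> TB" "right_moves_win TB (gsum G ?D) q u" for q u
        using that IH unfolding right_moves_win_def ropts_gsum[of G] ropts_D by auto
    qed
  next
    assume "winL TB G p m"
    with less.prems show "winL TB (gsum G ?D) p m"
    proof (rule winL_mono_moves[rotated 2])
      show "left_move_wins TB (gsum G ?D) q u" if "q \<le> TB" "left_move_wins TB G q u" for q u
        using that IH unfolding left_move_wins_def lopts_gsum[of G] lopts_D by auto
      show "right_moves_win TB (gsum G ?D) q u" if "q \<le> TB" "right_moves_win TB G q u" for q u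
        using that IH winL_gsum_one_of_right_moves_win
        unfolding right_moves_win_def ropts_gsum[of G] ropts_D by (auto simp del: One_nat_def)
    qed
  qed
qed

lemma winL_int_game_gconj_cancel:
  assumes "p \<le> TB"
  shows "winL TB (gsum (gsum (int_game n) (gconj (int_game n))) X) p m \<longleftrightarrow> winL TB X p m"
proof (induction n)
  case (Suc n)
  have "gsum (gsum (int_game (Suc n)) (gconj (int_game (Suc n)))) X
      = gsum (gsum (gsum (int_game n) (gconj (int_game n))) X) (gsum (int_game 1) (gconj (int_game 1)))"
    by (simp only: int_game_Suc[of n] gconj_gsum ac_simps)
  with Suc show ?case
    using winL_gsum_one_minus_one_cancel assms by simp
qed simp

theorem mainTheorem13:
  fixes TB n :: nat
  assumes "n \<ge> 1"
  shows "game_eq TB (gsum (int_game n) (gconj (int_game n))) (int_game 0)"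
  using winL_int_game_gconj_cancel[of _ TB n]
  unfolding game_eq_def game_ge_def outcome_le_def outcome_def by simp

end
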